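(* Let $P,N>0$ and $L\in\mathbb{Z}_{\ge2}$. For each $n$ let $\mathcal{D}=\mathcal{D}_n$ be a probability distribution supported on $\mathcal{B}^n(\sqrt{nP})$, and let $x_1,\dots,x_L$ be i.i.d. with law $\mathcal{D}$. Suppose $E(P,N,L)$ and $\overline{E}(P,N,L)$ are real numbers with $$E(P,N,L)\le\lim_{n\to\infty}-\frac1n\ln\Pr\left[\mathrm{rad}^2(x_1,\dots,x_L)\le nN\right],\qquad \overline{E}(P,N,L)\le\lim_{n\to\infty}-\frac1n\ln\Pr\left[\overline{\mathrm{rad}}^2(x_1,\dots,x_L)\le nN\right].$$ Then $$C_{L-1}(P,N)\ge\frac{E(P,N,L)}{L-1},\qquad \overline{C}_{L-1}(P,N)\ge\frac{\overline{E}(P,N,L)}{L-1}.$$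
   Context: $\mathcal{B}^n(y,r)$ is the closed Euclidean ball of radius $r$ centered at $y$; $\mathcal{B}^n(r)=\mathcal{B}^n(0,r)$. For $x_1,\dots,x_L\in\mathbb{R}^n$: the squared Chebyshev radius is $\mathrm{rad}^2(x_1,\dots,x_L)=\min_{y\in\mathbb{R}^n}\max_i\|x_i-y\|_2^2$; the average squared radius is $\overline{\mathrm{rad}}^2(x_1,\dots,x_L)=\frac1L\sum_i\|x_i-\bar x\|_2^2$ with $\bar x=\frac1L\sum_ix_i$. A finite $\mathcal{C}\subseteq\mathcal{B}^n(\sqrt{nP})$ is $(P,N,L-1)$-list-decodable if $|\mathcal{C}\cap\mathcal{B}^n(y,\sqrt{nN})|\le L-1$ for all $y\in\mathbb{R}^n$ (equivalently every $L$ distinct points have $\mathrm{rad}^2>nN$), and $(P,N,L-1)$-average-radius list-decodable if every $L$ distinct points have $\overline{\mathrm{rad}}^2>nN$. Rate $R(\mathcal{C})=\frac1n\ln|\mathcal{C}|$. $C_{L-1}(P,N)$ (resp. $\overline{C}_{L-1}(P,N)$) is $\limsup_{n\to\infty}$ of the supremum of $R(\mathcal{C})$ over $(P,N,L-1)$-list-decodable (resp. average-radius list-decodable) codes $\mathcal{C}\subseteq\mathcal{B}^n(\sqrt{nP})$. *)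

theory Defs
  imports "HOL-Probability.Probability"
begin

text \<open>Vectors of R^n are represented as extensional functions on {..<n},
  i.e. elements of PiE {..<n} UNIV (the space of the product measure
  PiM {..<n} lborel). A tuple (x_1,...,x_L) is a function on {..<L}.\<close>

definition Rn :: "nat \<Rightarrow> (nat \<Rightarrow> real) set" where
  "Rn n = ({..<n} \<rightarrow>\<^sub>E (UNIV :: real set))"

definition sqnorm :: "nat \<Rightarrow> (nat \<Rightarrow> real) \<Rightarrow> real" where
  "sqnorm n x = (\<Sum>i<n. (x i)\<^sup>2)"

definition rball :: "nat \<Rightarrow> (nat \<Rightarrow> real) \<Rightarrow> real \<Rightarrow> (nat \<Rightarrow> real) set" where
  "rball n y r = {x \<in> Rn n. sqrt (sqnorm n (\<lambda>i. x i - y i)) \<le> r}"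

definition cheb_rad2 :: "nat \<Rightarrow> nat \<Rightarrow> (nat \<Rightarrow> nat \<Rightarrow> real) \<Rightarrow> real" where
  "cheb_rad2 n L x = (INF y \<in> Rn n. Max ((\<lambda>i. sqnorm n (\<lambda>j. x i j - y j)) ` {..<L}))"

definition avg_rad2 :: "nat \<Rightarrow> nat \<Rightarrow> (nat \<Rightarrow> nat \<Rightarrow> real) \<Rightarrow> real" where
  "avg_rad2 n L x =
     (let xbar = (\<lambda>j. (\<Sum>i<L. x i j) / real L)
      in (\<Sum>i<L. sqnorm n (\<lambda>j. x i j - xbar j)) / real L)"

definition list_decodable :: "nat \<Rightarrow> real \<Rightarrow> real \<Rightarrow> nat \<Rightarrow> (nat \<Rightarrow> real) set \<Rightarrow> bool" where
  "list_decodable n P N L C \<longleftrightarrow> finite C \<and> C \<subseteq> rball n (\<lambda>_. 0) (sqrt (real n * P)) \<and>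
     (\<forall>y \<in> Rn n. card (C \<inter> rball n y (sqrt (real n * N))) \<le> L - 1)"

definition avg_list_decodable :: "nat \<Rightarrow> real \<Rightarrow> real \<Rightarrow> nat \<Rightarrow> (nat \<Rightarrow> real) set \<Rightarrow> bool" where
  "avg_list_decodable n P N L C \<longleftrightarrow> finite C \<and> C \<subseteq> rball n (\<lambda>_. 0) (sqrt (real n * P)) \<and>
     (\<forall>x. (\<forall>i<L. x i \<in> C) \<and> inj_on x {..<L} \<longrightarrow> avg_rad2 n L x > real n * N)"

definition code_rate :: "nat \<Rightarrow> (nat \<Rightarrow> real) set \<Rightarrow> real" where
  "code_rate n C = ln (real (card C)) / real n"

text \<open>C_{L-1}(P,N) and its average-radius variant, as extended reals.\<close>
definition list_capacity :: "real \<Rightarrow> real \<Rightarrow> nat \<Rightarrow> ereal" where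
  "list_capacity P N L =
     limsup (\<lambda>n. SUP C \<in> {C. list_decodable n P N L C}. ereal (code_rate n C))"

definition avg_list_capacity :: "real \<Rightarrow> real \<Rightarrow> nat \<Rightarrow> ereal" where
  "avg_list_capacity P N L =
     limsup (\<lambda>n. SUP C \<in> {C. avg_list_decodable n P N L C}. ereal (code_rate n C))"

definition neg_log_rate :: "nat \<Rightarrow> real \<Rightarrow> ereal" where
  "neg_log_rate n p = (if p = 0 then \<infinity> else ereal (- ln p / real n))"

end

theory Submission
  imports Defs
begin

text \<open>Random coding with expurgation. Draw m \<approx> exp (n e) codewords i.i.d. from D. Any injective
  choice of L of them is an i.i.d. L-tuple, so the expected number of such choices with radius at
  most n N is at most m^L p, where p decays like exp (- n E); for (L - 1) e < E this is at most m/2.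
  Deleting one codeword from every bad choice leaves m/2 indices without bad choices. Constant
  tuples have radius 0, so no value repeats L times among the survivors, which therefore carry at
  least m / (2 (L - 1)) distinct codewords, any L of which have radius above n N. This gives rate
  e for every e < E / (L - 1). Measurability of the Chebyshev radius comes from taking the
  infimum over rational centres only.\<close>

section \<open>Radii of L-tuples\<close>

definition max_sqdist :: "nat \<Rightarrow> nat \<Rightarrow> (nat \<Rightarrow> nat \<Rightarrow> real) \<Rightarrow> (nat \<Rightarrow> real) \<Rightarrow> real" where
  "max_sqdist n L x y = Max ((\<lambda>i. sqnorm n (\<lambda>j. x i j - y j)) ` {..<L})"

lemma cheb_rad2_eq_INF_max_sqdist: "cheb_rad2 n L x = (INF y \<in> Rn n. max_sqdist n L x y)"
  unfolding cheb_rad2_def max_sqdist_def ..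

lemma sqnorm_nonneg: "0 \<le> sqnorm n v"
  unfolding sqnorm_def by (intro sum_nonneg) auto

lemma sqnorm_le_max_sqdist: "i < L \<Longrightarrow> sqnorm n (\<lambda>j. x i j - y j) \<le> max_sqdist n L x y"
  unfolding max_sqdist_def by (intro Max_ge) auto

lemma max_sqdist_le_iff:
  "0 < L \<Longrightarrow> max_sqdist n L x y \<le> c \<longleftrightarrow> (\<forall>i<L. sqnorm n (\<lambda>j. x i j - y j) \<le> c)"
  unfolding max_sqdist_def by (subst Max_le_iff) auto

lemma max_sqdist_nonneg: "0 < L \<Longrightarrow> 0 \<le> max_sqdist n L x y"
  using sqnorm_le_max_sqdist[of 0 L n x y] sqnorm_nonneg[of n "\<lambda>j. x 0 j - y j"] by linarith

lemma bdd_below_max_sqdist: "0 < L \<Longrightarrow> bdd_below (max_sqdist n L x ` A)"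
  using max_sqdist_nonneg by (intro bdd_belowI[of _ 0]) auto

lemma cheb_rad2_le_max_sqdist: "0 < L \<Longrightarrow> y \<in> Rn n \<Longrightarrow> cheb_rad2 n L x \<le> max_sqdist n L x y"
  unfolding cheb_rad2_eq_INF_max_sqdist by (rule cINF_lower[OF bdd_below_max_sqdist])

lemma square_shift_le:
  fixes t s \<delta> :: real
  assumes "\<bar>s\<bar> \<le> \<delta>" "\<delta> \<le> 1"
  shows "(t + s)\<^sup>2 \<le> (1 + \<delta>) * t\<^sup>2 + 2 * \<delta>"
proof -
  have "2 * \<bar>t\<bar> \<le> t\<^sup>2 + 1"
    using sum_squares_ge_zero[of "\<bar>t\<bar> - 1" 0] by (simp add: power2_eq_square algebra_simps)
  then have "2 * t * s \<le> \<delta> * (t\<^sup>2 + 1)"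
    using assms abs_ge_self[of "t * s"] mult_mono[of "2 * \<bar>t\<bar>" "t\<^sup>2 + 1" "\<bar>s\<bar>" \<delta>]
    by (simp add: abs_mult algebra_simps)
  moreover have "s\<^sup>2 \<le> \<delta>"
    using assms mult_mono[of "\<bar>s\<bar>" \<delta> "\<bar>s\<bar>" 1] by (simp add: power2_eq_square abs_mult_self_eq)
  ultimately show ?thesis by (simp add: power2_eq_square algebra_simps)
qed

lemma sqnorm_shift_le:
  assumes "\<forall>j<n. \<bar>y' j - y j\<bar> \<le> \<delta>" "\<delta> \<le> 1"
  shows "sqnorm n (\<lambda>j. a j - y' j) \<le> (1 + \<delta>) * sqnorm n (\<lambda>j. a j - y j) + 2 * \<delta> * n"
proof -
  have "sqnorm n (\<lambda>j. a j - y' j) = (\<Sum>j<n. ((a j - y j) + (y j - y' j))\<^sup>2)"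
    unfolding sqnorm_def by simp
  also have "\<dots> \<le> (\<Sum>j<n. (1 + \<delta>) * (a j - y j)\<^sup>2 + 2 * \<delta>)"
    using assms by (intro sum_mono square_shift_le) (auto simp: abs_minus_commute)
  also have "\<dots> = (1 + \<delta>) * sqnorm n (\<lambda>j. a j - y j) + 2 * \<delta> * n"
    unfolding sqnorm_def by (simp add: sum.distrib sum_distrib_left)
  finally show ?thesis .
qed

lemma max_sqdist_shift_le:
  assumes "0 < L" "\<forall>j<n. \<bar>y' j - y j\<bar> \<le> \<delta>" "0 \<le> \<delta>" "\<delta> \<le> 1"
  shows "max_sqdist n L x y' \<le> (1 + \<delta>) * max_sqdist n L x y + 2 * \<delta> * n"
  unfolding max_sqdist_le_iff[OF \<open>0 < L\<close>]
proof (intro allI impI)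
  fix i assume "i < L"
  have "sqnorm n (\<lambda>j. x i j - y' j) \<le> (1 + \<delta>) * sqnorm n (\<lambda>j. x i j - y j) + 2 * \<delta> * n"
    using sqnorm_shift_le[OF assms(2,4)] .
  also have "\<dots> \<le> (1 + \<delta>) * max_sqdist n L x y + 2 * \<delta> * n"
    using sqnorm_le_max_sqdist[OF \<open>i < L\<close>] assms(3) by (intro add_right_mono mult_left_mono) auto
  finally show "sqnorm n (\<lambda>j. x i j - y' j) \<le> (1 + \<delta>) * max_sqdist n L x y + 2 * \<delta> * n" .
qed

lemma exists_rational_near:
  fixes y :: "nat \<Rightarrow> real"
  assumes "0 < \<delta>"
  shows "\<exists>y'\<in>{..<n} \<rightarrow>\<^sub>E \<rat>. \<forall>j<n. \<bar>y' j - y j\<bar> \<le> \<delta>"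
proof -
  have "\<forall>j. \<exists>q\<in>\<rat>. y j < q \<and> q < y j + \<delta>"
    using Rats_dense_in_real assms by simp
  then obtain q where q: "\<And>j. q j \<in> \<rat> \<and> y j < q j \<and> q j < y j + \<delta>"
    by metis
  have "\<bar>q j - y j\<bar> \<le> \<delta>" for j
    using q[of j] by auto
  moreover have "restrict q {..<n} \<in> {..<n} \<rightarrow>\<^sub>E \<rat>"
    using q by auto
  ultimately show ?thesis by (intro bexI[of _ "restrict q {..<n}"]) auto
qed

lemma cheb_rad2_eq_INF_rational:
  assumes "0 < L"
  shows "cheb_rad2 n L x = (INF y \<in> {..<n} \<rightarrow>\<^sub>E \<rat>. max_sqdist n L x y)"
proof (rule antisym)
  have "{..<n} \<rightarrow>\<^sub>E \<rat> \<subseteq> Rn n" "{..<n} \<rightarrow>\<^sub>E \<rat> \<noteq> {}"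
    unfolding Rn_def using PiE_eq_empty_iff[of "{..<n}" "\<lambda>_. \<rat>"] by auto
  then show "cheb_rad2 n L x \<le> (INF y \<in> {..<n} \<rightarrow>\<^sub>E \<rat>. max_sqdist n L x y)"
    unfolding cheb_rad2_eq_INF_max_sqdist
    using bdd_below_max_sqdist[OF assms] by (intro cINF_superset_mono) auto
next
  have "Rn n \<noteq> {}" unfolding Rn_def by auto
  then show "(INF y \<in> {..<n} \<rightarrow>\<^sub>E \<rat>. max_sqdist n L x y) \<le> cheb_rad2 n L x"
    unfolding cheb_rad2_eq_INF_max_sqdist
  proof (rule cINF_greatest)
    fix y
    let ?g = "max_sqdist n L x y"
    show "(INF y \<in> {..<n} \<rightarrow>\<^sub>E \<rat>. max_sqdist n L x y) \<le> ?g"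
    proof (rule field_le_epsilon)
      fix e :: real assume "0 < e"
      define \<delta> where "\<delta> = min 1 (e / (?g + 2 * n + 1))"
      have "0 < ?g + 2 * n + 1"
        using max_sqdist_nonneg[OF assms, of n x y] by simp
      then have \<delta>: "0 < \<delta>" "\<delta> \<le> 1" "\<delta> * (?g + 2 * n + 1) \<le> e"
        using \<open>0 < e\<close> by (auto simp: \<delta>_def pos_le_divide_eq[symmetric])
      obtain y' where y': "y' \<in> {..<n} \<rightarrow>\<^sub>E \<rat>" "\<forall>j<n. \<bar>y' j - y j\<bar> \<le> \<delta>"
        using exists_rational_near[OF \<open>0 < \<delta>\<close>] by blast
      have "(INF y \<in> {..<n} \<rightarrow>\<^sub>E \<rat>. max_sqdist n L x y) \<le> max_sqdist n L x y'"
        by (rule cINF_lower[OF bdd_below_max_sqdist[OF assms] y'(1)])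
      also have "\<dots> \<le> (1 + \<delta>) * ?g + 2 * \<delta> * n"
        using max_sqdist_shift_le[OF assms y'(2)] \<delta> by simp
      also have "\<dots> \<le> ?g + e"
        using \<delta> by (simp add: algebra_simps)
      finally show "(INF y \<in> {..<n} \<rightarrow>\<^sub>E \<rat>. max_sqdist n L x y) \<le> ?g + e" .
    qed
  qed
qed

abbreviation tuple_space :: "nat \<Rightarrow> nat \<Rightarrow> (nat \<Rightarrow> nat \<Rightarrow> real) measure" where
  "tuple_space n L \<equiv> PiM {..<L} (\<lambda>_. PiM {..<n} (\<lambda>_. lborel))"

lemma tuple_coordinate_measurable[measurable]:
  assumes "i < L" "j < n"
  shows "(\<lambda>x. x i j) \<in> borel_measurable (tuple_space n L)"
proof -
  have "(\<lambda>x. x i) \<in> measurable (tuple_space n L) (PiM {..<n} (\<lambda>_. lborel))"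
    using \<open>i < L\<close> by (intro measurable_component_singleton) auto
  moreover have "(\<lambda>v. v j) \<in> borel_measurable (PiM {..<n} (\<lambda>_. lborel :: real measure))"
    using \<open>j < n\<close> by (simp add: measurable_component_singleton)
  ultimately show ?thesis
    by (rule measurable_compose)
qed

lemma avg_rad2_measurable: "avg_rad2 n L \<in> borel_measurable (tuple_space n L)"
  unfolding avg_rad2_def Let_def sqnorm_def by measurable

lemma max_sqdist_measurable: "(\<lambda>x. max_sqdist n L x y) \<in> borel_measurable (tuple_space n L)"
  unfolding max_sqdist_def sqnorm_def by measurable

lemma cheb_rad2_measurable:
  assumes "0 < L"
  shows "cheb_rad2 n L \<in> borel_measurable (tuple_space n L)"
proof -
  have "(\<lambda>x. INF y \<in> {..<n} \<rightarrow>\<^sub>E \<rat>. max_sqdist n L x y) \<in> borel_measurable (tuple_space n L)"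
    by (intro borel_measurable_cINF_real countable_PiE max_sqdist_measurable) (auto simp: countable_rat)
  moreover have "cheb_rad2 n L = (\<lambda>x. INF y \<in> {..<n} \<rightarrow>\<^sub>E \<rat>. max_sqdist n L x y)"
    using cheb_rad2_eq_INF_rational[OF assms] by (rule ext)
  ultimately show ?thesis by simp
qed

lemma cheb_rad2_restrict: "cheb_rad2 n L (restrict x {..<L}) = cheb_rad2 n L x"
  unfolding cheb_rad2_def by simp

lemma avg_rad2_restrict: "avg_rad2 n L (restrict x {..<L}) = avg_rad2 n L x"
  unfolding avg_rad2_def Let_def sqnorm_def by simp

lemma cheb_rad2_const:
  assumes "0 < L" "v \<in> Rn n"
  shows "cheb_rad2 n L (\<lambda>_. v) = 0"
proof (rule antisym)
  have "max_sqdist n L (\<lambda>_. v) v = 0"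
    using assms(1) max_sqdist_nonneg[OF assms(1)] by (simp add: max_sqdist_le_iff sqnorm_def eq_iff)
  then show "cheb_rad2 n L (\<lambda>_. v) \<le> 0"
    using cheb_rad2_le_max_sqdist[OF assms] by metis
  show "0 \<le> cheb_rad2 n L (\<lambda>_. v)"
    unfolding cheb_rad2_eq_INF_max_sqdist using assms
    by (intro cINF_greatest max_sqdist_nonneg) auto
qed

lemma avg_rad2_const: "0 < L \<Longrightarrow> avg_rad2 n L (\<lambda>_. v) = 0"
  unfolding avg_rad2_def Let_def sqnorm_def by simp

lemma cheb_rad2_le_if_in_rball:
  assumes "0 < L" "0 \<le> r" "y \<in> Rn n" "\<forall>i<L. x i \<in> rball n y r"
  shows "cheb_rad2 n L x \<le> r\<^sup>2"
proof -
  have "sqnorm n (\<lambda>j. x i j - y j) \<le> r\<^sup>2" if "i < L" for i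
    using assms(4) that unfolding rball_def by (auto intro: sqrt_le_D)
  then have "max_sqdist n L x y \<le> r\<^sup>2"
    using max_sqdist_le_iff[OF assms(1)] by blast
  then show ?thesis
    using cheb_rad2_le_max_sqdist[OF assms(1,3), of x] by linarith
qed

lemma list_decodable_if_cheb_rad2_gt:
  assumes "finite C" "C \<subseteq> rball n (\<lambda>_. 0) (sqrt (real n * P))" "0 \<le> N" "0 < L"
    and spread: "\<forall>x. (\<forall>i<L. x i \<in> C) \<and> inj_on x {..<L} \<longrightarrow> real n * N < cheb_rad2 n L x"
  shows "list_decodable n P N L C"
  unfolding list_decodable_def
proof (intro conjI assms(1,2) ballI)
  fix y assume "y \<in> Rn n"
  let ?B = "C \<inter> rball n y (sqrt (real n * N))"
  show "card ?B \<le> L - 1"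
  proof (rule ccontr)
    assume "\<not> card ?B \<le> L - 1"
    then have "card {..<L} \<le> card ?B" by simp
    then obtain x where x: "x ` {..<L} \<subseteq> ?B" "inj_on x {..<L}"
      using card_le_inj[of "{..<L}" ?B] \<open>finite C\<close> by blast
    then have "cheb_rad2 n L x \<le> (sqrt (real n * N))\<^sup>2"
      using \<open>y \<in> Rn n\<close> \<open>0 < L\<close> \<open>0 \<le> N\<close> by (intro cheb_rad2_le_if_in_rball) auto
    then show False
      using spread x \<open>0 \<le> N\<close> by (fastforce simp: real_sqrt_pow2)
  qed
qed

section \<open>Random coding with expurgation\<close>

lemma (in prob_space) exists_le_expectation:
  fixes X :: "'a \<Rightarrow> real"
  assumes "integrable M X" "AE x in M. P x"
  shows "\<exists>x\<in>space M. P x \<and> X x \<le> expectation X"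
proof (rule ccontr)
  assume none: "\<not> ?thesis"
  have "AE x in M. expectation X < X x"
    using assms(2) AE_space by eventually_elim (use none in auto)
  from expectation_greater[OF assms(1) this] show False
    by simp
qed

definition injective_selections_in :: "nat \<Rightarrow> nat \<Rightarrow> (nat \<Rightarrow> 'a) set \<Rightarrow> (nat \<Rightarrow> 'a) \<Rightarrow> (nat \<Rightarrow> nat) set" where
  "injective_selections_in L m S \<omega> =
     {\<sigma> \<in> {..<L} \<rightarrow>\<^sub>E {..<m}. inj_on \<sigma> {..<L} \<and> (\<lambda>i\<in>{..<L}. \<omega> (\<sigma> i)) \<in> S}"

lemma finite_injective_selections_in: "finite (injective_selections_in L m S \<omega>)"
  unfolding injective_selections_in_def
  by (rule finite_subset[of _ "{..<L} \<rightarrow>\<^sub>E {..<m}"]) (auto intro: finite_PiE)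

lemma expected_card_injective_selections_in:
  fixes D :: "'a measure" and m :: nat
  assumes D: "prob_space D" and S: "S \<in> sets (PiM {..<L} (\<lambda>_. D))"
  defines "hits \<equiv> \<lambda>\<omega>. real (card (injective_selections_in L m S \<omega>))"
  shows "integrable (PiM {..<m} (\<lambda>_. D)) hits"
    and "(\<integral>\<omega>. hits \<omega> \<partial>PiM {..<m} (\<lambda>_. D)) \<le> real m ^ L * measure (PiM {..<L} (\<lambda>_. D)) S"
proof -
  let ?\<Omega> = "PiM {..<m} (\<lambda>_. D)" and ?Q = "PiM {..<L} (\<lambda>_. D)"
  interpret \<Omega>: prob_space ?\<Omega>
    using D by (intro prob_space_PiM) auto
  define Inj where "Inj = {\<sigma> \<in> {..<L} \<rightarrow>\<^sub>E {..<m}. inj_on \<sigma> {..<L}}"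
  define A where "A \<sigma> = (\<lambda>\<omega>. \<lambda>i\<in>{..<L}. \<omega> (\<sigma> i)) -` S \<inter> space ?\<Omega>" for \<sigma>
  have finite_Inj: "finite Inj"
    unfolding Inj_def by (rule finite_subset[of _ "{..<L} \<rightarrow>\<^sub>E {..<m}"]) (auto intro: finite_PiE)
  have "card Inj \<le> card ({..<L} \<rightarrow>\<^sub>E {..<m})"
    unfolding Inj_def by (intro card_mono finite_PiE) auto
  then have card_Inj: "card Inj \<le> m ^ L"
    by (simp add: card_PiE)
  have A: "A \<sigma> \<in> sets ?\<Omega>" "measure ?\<Omega> (A \<sigma>) = measure ?Q S" if "\<sigma> \<in> Inj" for \<sigma>
  proof -
    have meas: "(\<lambda>\<omega>. \<lambda>i\<in>{..<L}. \<omega> (\<sigma> i)) \<in> measurable ?\<Omega> ?Q"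
      using that unfolding Inj_def
      by (intro measurable_restrict measurable_component_singleton) auto
    have "distr ?\<Omega> ?Q (\<lambda>\<omega>. \<lambda>i\<in>{..<L}. \<omega> (\<sigma> i)) = ?Q"
      using distr_PiM_reindex[of "{..<m}" "\<lambda>_. D" \<sigma> "{..<L}"] D that unfolding Inj_def by auto
    then show "A \<sigma> \<in> sets ?\<Omega>" "measure ?\<Omega> (A \<sigma>) = measure ?Q S"
      using measurable_sets[OF meas S] measure_distr[OF meas S] unfolding A_def by simp_all
  qed
  have hits_eq: "hits \<omega> = (\<Sum>\<sigma>\<in>Inj. indicator (A \<sigma>) \<omega>)" if "\<omega> \<in> space ?\<Omega>" for \<omega>
    using finite_Inj that
    by (simp add: hits_def injective_selections_in_def Inj_def A_def indicator_def sum.If_cases Int_def conj_assoc)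
  have int: "integrable ?\<Omega> (\<lambda>\<omega>. \<Sum>\<sigma>\<in>Inj. indicator (A \<sigma>) \<omega> :: real)"
    using A by (intro Bochner_Integration.integrable_sum integrable_real_indicator)
      (auto simp: \<Omega>.emeasure_eq_measure)
  then show "integrable ?\<Omega> hits"
    by (subst Bochner_Integration.integrable_cong[OF refl hits_eq])
  have "(\<integral>\<omega>. hits \<omega> \<partial>?\<Omega>) = (\<integral>\<omega>. (\<Sum>\<sigma>\<in>Inj. indicator (A \<sigma>) \<omega>) \<partial>?\<Omega>)"
    by (rule Bochner_Integration.integral_cong[OF refl hits_eq])
  also have "\<dots> = (\<Sum>\<sigma>\<in>Inj. measure ?\<Omega> (A \<sigma>))"
    using A by (subst Bochner_Integration.integral_sum)
      (auto intro!: integrable_real_indicator simp: \<Omega>.emeasure_eq_measure)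
  also have "\<dots> = card Inj * measure ?Q S"
    using A by simp
  also have "\<dots> \<le> real m ^ L * measure ?Q S"
    using card_Inj by (intro mult_right_mono) (auto simp flip: of_nat_power)
  finally show "(\<integral>\<omega>. hits \<omega> \<partial>?\<Omega>) \<le> real m ^ L * measure ?Q S" .
qed

lemma delete_first_indices:
  fixes Bad :: "(nat \<Rightarrow> nat) set"
  assumes "finite Bad" "0 < L"
  obtains I where "I \<subseteq> {..<m}" "real m - real (card Bad) \<le> real (card I)"
    "\<And>\<sigma>. \<sigma> \<in> Bad \<Longrightarrow> \<not> \<sigma> ` {..<L} \<subseteq> I"
proof
  let ?I = "{..<m} - (\<lambda>\<sigma>. \<sigma> 0) ` Bad"
  show "?I \<subseteq> {..<m}" by blast
  have "card {..<m} - card ((\<lambda>\<sigma>. \<sigma> 0) ` Bad) \<le> card ?I"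
    by (rule diff_card_le_card_Diff) (use assms in auto)
  moreover have "card ((\<lambda>\<sigma>. \<sigma> 0) ` Bad) \<le> card Bad"
    using assms(1) by (rule card_image_le)
  ultimately have "m \<le> card ?I + card Bad"
    by simp
  then show "real m - real (card Bad) \<le> real (card ?I)"
    by (simp add: diff_le_eq flip: of_nat_add)
  show "\<not> \<sigma> ` {..<L} \<subseteq> ?I" if "\<sigma> \<in> Bad" for \<sigma>
    using that assms(2) by auto
qed

lemma random_sample_expurgated:
  fixes D :: "'a measure"
  assumes D: "prob_space D" and S: "S \<in> sets (PiM {..<L} (\<lambda>_. D))"
    and G: "AE x in D. G x" and "0 < L"
  obtains c I where "\<forall>i<m. c i \<in> space D \<and> G (c i)" "I \<subseteq> {..<m}"
    "real m - real m ^ L * measure (PiM {..<L} (\<lambda>_. D)) S \<le> real (card I)"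
    "\<And>\<sigma>. \<sigma> ` {..<L} \<subseteq> I \<Longrightarrow> inj_on \<sigma> {..<L} \<Longrightarrow> (\<lambda>i\<in>{..<L}. c (\<sigma> i)) \<notin> S"
proof -
  let ?\<Omega> = "PiM {..<m} (\<lambda>_. D)"
  interpret \<Omega>: prob_space ?\<Omega>
    using D by (intro prob_space_PiM) auto
  let ?Bad = "injective_selections_in L m S"
  have "AE \<omega> in ?\<Omega>. \<forall>i\<in>{..<m}. G (\<omega> i)"
    using D G by (intro AE_finite_allI AE_PiM_component) auto
  from \<Omega>.exists_le_expectation[OF expected_card_injective_selections_in(1)[OF D S] this]
  obtain \<omega> where \<omega>: "\<omega> \<in> space ?\<Omega>" "\<forall>i\<in>{..<m}. G (\<omega> i)"
      "real (card (?Bad \<omega>)) \<le> (\<integral>\<omega>. real (card (?Bad \<omega>)) \<partial>?\<Omega>)"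
    by blast
  then have card_Bad: "real (card (?Bad \<omega>)) \<le> real m ^ L * measure (PiM {..<L} (\<lambda>_. D)) S"
    using expected_card_injective_selections_in(2)[OF D S, of m] by linarith
  obtain I where I: "I \<subseteq> {..<m}" "real m - real (card (?Bad \<omega>)) \<le> real (card I)"
      "\<And>\<sigma>. \<sigma> \<in> ?Bad \<omega> \<Longrightarrow> \<not> \<sigma> ` {..<L} \<subseteq> I"
    using delete_first_indices[OF finite_injective_selections_in \<open>0 < L\<close>] by metis
  show thesis
  proof
    show "\<forall>i<m. \<omega> i \<in> space D \<and> G (\<omega> i)"
      using \<omega>(1,2) by (auto simp: space_PiM)
    show "real m - real m ^ L * measure (PiM {..<L} (\<lambda>_. D)) S \<le> real (card I)"
      using I(2) card_Bad by linarith
    show "(\<lambda>i\<in>{..<L}. \<omega> (\<sigma> i)) \<notin> S" if "\<sigma> ` {..<L} \<subseteq> I" "inj_on \<sigma> {..<L}" for \<sigma>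
    proof
      assume "(\<lambda>i\<in>{..<L}. \<omega> (\<sigma> i)) \<in> S"
      moreover have "(\<lambda>i\<in>{..<L}. \<omega> (restrict \<sigma> {..<L} i)) = (\<lambda>i\<in>{..<L}. \<omega> (\<sigma> i))"
        by (rule restrict_ext) simp
      ultimately have "restrict \<sigma> {..<L} \<in> ?Bad \<omega>"
        using that I(1) unfolding injective_selections_in_def by auto
      then show False
        using I(3) that(1) by (metis image_restrict_eq)
    qed
  qed (use I(1) in auto)
qed

lemma card_le_card_image_mult:
  assumes "finite I" "\<And>v. v \<in> c ` I \<Longrightarrow> card {i \<in> I. c i = v} \<le> k"
  shows "card I \<le> card (c ` I) * k"
proof -
  have "card I = card (\<Union>v \<in> c ` I. {i \<in> I. c i = v})"
    by (rule arg_cong[of _ _ card]) blast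
  also have "\<dots> \<le> (\<Sum>v \<in> c ` I. card {i \<in> I. c i = v})"
    using assms(1) by (intro card_UN_le) simp
  also have "\<dots> \<le> (\<Sum>v \<in> c ` I. k)"
    using assms(2) by (rule sum_mono)
  finally show ?thesis
    by simp
qed

lemma obtain_injective_preimage:
  assumes "x ` A \<subseteq> c ` I" "inj_on x A"
  obtains \<sigma> where "\<sigma> ` A \<subseteq> I" "inj_on \<sigma> A" "\<And>i. i \<in> A \<Longrightarrow> c (\<sigma> i) = x i"
proof
  let ?\<sigma> = "\<lambda>i. inv_into I c (x i)"
  show "?\<sigma> ` A \<subseteq> I" "\<And>i. i \<in> A \<Longrightarrow> c (?\<sigma> i) = x i"
    using assms(1) by (auto simp: image_subset_iff intro: inv_into_into f_inv_into_f)
  then have "inj_on (c \<circ> ?\<sigma>) A"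
    using assms(2) by (simp add: inj_on_def)
  then show "inj_on ?\<sigma> A"
    by (rule inj_on_imageI2)
qed

lemma card_le_card_image_mult_if_no_bad_tuple:
  fixes c :: "nat \<Rightarrow> 'a" and bad :: "(nat \<Rightarrow> 'a) \<Rightarrow> bool"
  assumes "finite I"
    and bad_restrict: "\<And>x. bad (restrict x {..<L}) = bad x"
    and bad_const: "\<And>i. i \<in> I \<Longrightarrow> bad (\<lambda>_. c i)"
    and no_bad: "\<And>\<sigma>. \<sigma> ` {..<L} \<subseteq> I \<Longrightarrow> inj_on \<sigma> {..<L} \<Longrightarrow> \<not> bad (c \<circ> \<sigma>)"
  shows "card I \<le> card (c ` I) * (L - 1)"
proof (rule card_le_card_image_mult[OF \<open>finite I\<close>], rule ccontr)
  fix v assume "v \<in> c ` I" "\<not> card {i \<in> I. c i = v} \<le> L - 1"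
  then have "card {..<L} \<le> card {i \<in> I. c i = v}"
    by simp
  then obtain \<sigma> where \<sigma>: "\<sigma> ` {..<L} \<subseteq> {i \<in> I. c i = v}" "inj_on \<sigma> {..<L}"
    using card_le_inj[of "{..<L}" "{i \<in> I. c i = v}"] \<open>finite I\<close> by auto
  then have "restrict (c \<circ> \<sigma>) {..<L} = restrict (\<lambda>_. v) {..<L}"
    by (intro restrict_ext) auto
  then have "bad (c \<circ> \<sigma>) = bad (\<lambda>_. v)"
    by (metis bad_restrict)
  moreover have "bad (\<lambda>_. v)"
    using \<open>v \<in> c ` I\<close> bad_const by blast
  ultimately show False
    using no_bad \<sigma> by auto
qed

lemma not_bad_if_injective_into_image:
  fixes c :: "nat \<Rightarrow> 'a" and bad :: "(nat \<Rightarrow> 'a) \<Rightarrow> bool"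
  assumes bad_restrict: "\<And>x. bad (restrict x {..<L}) = bad x"
    and no_bad: "\<And>\<sigma>. \<sigma> ` {..<L} \<subseteq> I \<Longrightarrow> inj_on \<sigma> {..<L} \<Longrightarrow> \<not> bad (c \<circ> \<sigma>)"
    and x: "\<forall>i<L. x i \<in> c ` I" "inj_on x {..<L}"
  shows "\<not> bad x"
proof -
  have "x ` {..<L} \<subseteq> c ` I"
    using x(1) by auto
  then obtain \<sigma> where \<sigma>: "\<sigma> ` {..<L} \<subseteq> I" "inj_on \<sigma> {..<L}" "\<And>i. i \<in> {..<L} \<Longrightarrow> c (\<sigma> i) = x i"
    using obtain_injective_preimage x(2) by blast
  have "bad x = bad (c \<circ> \<sigma>)"
    using \<sigma>(3) bad_restrict by (metis comp_apply restrict_ext)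
  then show ?thesis
    using no_bad[OF \<sigma>(1,2)] by simp
qed

lemma exists_expurgated_code:
  fixes D :: "(nat \<Rightarrow> real) measure" and f :: "(nat \<Rightarrow> nat \<Rightarrow> real) \<Rightarrow> real"
  assumes D: "prob_space D" "sets D = sets (PiM {..<n} (\<lambda>_. lborel))" "AE x in D. x \<in> B"
    and "0 < L"
    and f: "f \<in> borel_measurable (tuple_space n L)"
    and f_restrict: "\<And>x. f (restrict x {..<L}) = f x"
    and f_const: "\<And>v. v \<in> Rn n \<Longrightarrow> f (\<lambda>_. v) \<le> t"
  defines "p \<equiv> measure (PiM {..<L} (\<lambda>_. D)) {x \<in> space (PiM {..<L} (\<lambda>_. D)). f x \<le> t}"
  obtains C where "finite C" "C \<subseteq> B" "real m - real m ^ L * p \<le> real (card C) * (real L - 1)"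
    "\<And>x. \<forall>i<L. x i \<in> C \<Longrightarrow> inj_on x {..<L} \<Longrightarrow> t < f x"
proof -
  let ?Q = "PiM {..<L} (\<lambda>_. D)"
  have space_D: "space D = Rn n"
    using sets_eq_imp_space_eq[OF D(2)] by (simp add: space_PiM Rn_def)
  have sets_Q: "sets ?Q = sets (tuple_space n L)"
    using D(2) by (intro sets_PiM_cong) auto
  have [measurable]: "f \<in> borel_measurable ?Q"
    using f by (subst measurable_cong_sets[OF sets_Q refl])
  have S: "{x \<in> space ?Q. f x \<le> t} \<in> sets ?Q"
    by measurable
  obtain c I where c: "\<forall>i<m. c i \<in> space D \<and> c i \<in> B" and I: "I \<subseteq> {..<m}"
      "real m - real m ^ L * p \<le> real (card I)"
      "\<And>\<sigma>. \<sigma> ` {..<L} \<subseteq> I \<Longrightarrow> inj_on \<sigma> {..<L} \<Longrightarrow> (\<lambda>i\<in>{..<L}. c (\<sigma> i)) \<notin> {x \<in> space ?Q. f x \<le> t}"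
    using random_sample_expurgated[where m = m, OF D(1) S D(3) \<open>0 < L\<close>] unfolding p_def by blast
  have "finite I"
    using I(1) finite_subset by blast
  have c_Rn: "c i \<in> Rn n" if "i \<in> I" for i
    using c I(1) that space_D by auto
  have no_bad: "\<not> f (c \<circ> \<sigma>) \<le> t" if "\<sigma> ` {..<L} \<subseteq> I" "inj_on \<sigma> {..<L}" for \<sigma>
  proof -
    have "(\<lambda>i\<in>{..<L}. c (\<sigma> i)) \<in> space ?Q"
      using that(1) c_Rn space_D by (auto simp: space_PiM)
    then show ?thesis
      using I(3)[OF that] f_restrict[of "c \<circ> \<sigma>"] by (simp add: restrict_def comp_def)
  qed
  have "card I \<le> card (c ` I) * (L - 1)"
    by (rule card_le_card_image_mult_if_no_bad_tuple[where bad = "\<lambda>x. f x \<le> t"])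
      (use \<open>finite I\<close> f_restrict f_const c_Rn no_bad in auto)
  then have "real (card I) \<le> real (card (c ` I) * (L - 1))"
    by (simp only: of_nat_le_iff)
  then have "real (card I) \<le> real (card (c ` I)) * (real L - 1)"
    using \<open>0 < L\<close> by (simp add: of_nat_diff)
  moreover have "t < f x" if "\<forall>i<L. x i \<in> c ` I" "inj_on x {..<L}" for x
    using not_bad_if_injective_into_image[of "\<lambda>x. f x \<le> t", OF _ no_bad that] f_restrict by simp
  ultimately show thesis
    using that[of "c ` I"] \<open>finite I\<close> c I(1,2) by fastforce
qed

section \<open>Rates\<close>

lemma eventually_less_real_mult:
  fixes a b :: real
  assumes "0 < a"
  shows "eventually (\<lambda>n. b < real n * a) sequentially"
  using filterlim_at_top_mult_tendsto_pos[OF tendsto_const assms filterlim_real_sequentially]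
  unfolding filterlim_at_top_dense by blast

lemma le_exp_if_neg_log_rate_gt:
  assumes "ereal e < neg_log_rate n p" "0 < n" "0 \<le> p"
  shows "p \<le> exp (- (real n * e))"
proof (cases "p = 0")
  case False
  then have "e < - ln p / real n"
    using assms(1) by (simp add: neg_log_rate_def)
  then have "e * real n < - ln p"
    using assms(2) by (subst (asm) pos_less_divide_eq) auto
  then have "ln p \<le> - (real n * e)"
    by (simp add: mult.commute)
  then show ?thesis
    using False assms(3) by (metis exp_le_cancel_iff exp_ln order_le_neq_trans)
qed simp

lemma large_code_at_length:
  fixes Dec :: "'a set \<Rightarrow> bool"
  assumes "2 \<le> L" "0 \<le> p" "p \<le> exp (- (real n * e1))"
    and gap: "ln 2 < real n * (e1 - e2 * (real L - 1))" and "ln 2 < real n * e2"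
    and build: "\<And>m. \<exists>C. Dec C \<and> real m - real m ^ L * p \<le> real (card C) * (real L - 1)"
  shows "\<exists>C. Dec C \<and> real n * e2 - ln (4 * (real L - 1)) \<le> ln (real (card C))"
proof -
  define a where "a = exp (real n * e2)"
  define m where "m = nat \<lfloor>a\<rfloor>"
  have "2 < a"
    using \<open>ln 2 < real n * e2\<close> unfolding a_def by (metis exp_less_mono exp_ln zero_less_numeral)
  then have "real m \<le> a" "a - 1 < real m"
    using floor_correct[of a] unfolding m_def by (auto simp: of_nat_nat)
  then have m: "real m \<le> a" "a / 2 \<le> real m"
    using \<open>2 < a\<close> by auto
  have "real m ^ (L - 1) * p \<le> a ^ (L - 1) * exp (- (real n * e1))"
    using m \<open>2 < a\<close> assms(2,3) by (intro mult_mono power_mono) auto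
  also have "a ^ (L - 1) = exp (real n * e2 * (real L - 1))"
    using \<open>2 \<le> L\<close> by (simp add: a_def exp_of_nat_mult[symmetric] of_nat_diff mult.commute)
  also have "exp (real n * e2 * (real L - 1)) * exp (- (real n * e1)) =
      exp (- (real n * (e1 - e2 * (real L - 1))))"
    by (simp add: exp_add[symmetric] right_diff_distrib mult.assoc)
  also have "\<dots> \<le> exp (- ln 2)"
    using gap by simp
  finally have "real m ^ (L - 1) * p \<le> 1 / 2"
    by (simp add: exp_minus)
  moreover have "real m ^ L = real m * real m ^ (L - 1)"
    using \<open>2 \<le> L\<close> by (cases L) auto
  ultimately have "real m ^ L * p \<le> real m / 2"
    using mult_left_mono[of "real m ^ (L - 1) * p" "1 / 2" "real m"] by (simp add: mult.assoc)
  moreover obtain C where C: "Dec C" "real m - real m ^ L * p \<le> real (card C) * (real L - 1)"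
    using build by blast
  ultimately have "a / 4 \<le> real (card C) * (real L - 1)"
    using m by linarith
  then have "a / (4 * (real L - 1)) \<le> real (card C)"
    using \<open>2 \<le> L\<close> by (simp add: pos_divide_le_eq algebra_simps)
  moreover have "0 < a / (4 * (real L - 1))"
    using \<open>2 < a\<close> \<open>2 \<le> L\<close> by simp
  ultimately have "ln (a / (4 * (real L - 1))) \<le> ln (real (card C))"
    by simp
  then show ?thesis
    using C(1) \<open>2 < a\<close> \<open>2 \<le> L\<close> by (auto simp: ln_div a_def)
qed

lemma eventually_code_rate_gt:
  fixes p :: "nat \<Rightarrow> real" and Dec :: "nat \<Rightarrow> (nat \<Rightarrow> real) set \<Rightarrow> bool"
  assumes "2 \<le> L" and p_nonneg: "\<And>n. 0 \<le> p n"
    and lim: "(\<lambda>n. neg_log_rate n (p n)) \<longlonglongrightarrow> l" and "ereal E \<le> l"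
    and build: "\<And>n m. \<exists>C. Dec n C \<and> real m - real m ^ L * p n \<le> real (card C) * (real L - 1)"
    and "0 \<le> r" "r < e" "e * (real L - 1) < E"
  shows "eventually (\<lambda>n. \<exists>C. Dec n C \<and> r < code_rate n C) sequentially"
proof -
  obtain e1 where e1: "e * (real L - 1) < e1" "e1 < E"
    using dense \<open>e * (real L - 1) < E\<close> by blast
  have "eventually (\<lambda>n. ereal e1 < neg_log_rate n (p n)) sequentially"
    using e1(2) by (intro order_tendstoD(1)[OF lim] less_le_trans[OF _ \<open>ereal E \<le> l\<close>]) simp
  moreover have "eventually (\<lambda>n. ln 2 < real n * (e1 - e * (real L - 1))) sequentially"
    using e1(1) by (intro eventually_less_real_mult) simp
  moreover have "eventually (\<lambda>n. ln 2 < real n * e) sequentially"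
    using \<open>0 \<le> r\<close> \<open>r < e\<close> by (intro eventually_less_real_mult) simp
  moreover have "eventually (\<lambda>n. ln (4 * (real L - 1)) < real n * (e - r)) sequentially"
    using \<open>r < e\<close> by (intro eventually_less_real_mult) simp
  ultimately show ?thesis
    using eventually_gt_at_top[of 0]
  proof eventually_elim
    case (elim n)
    obtain C where C: "Dec n C" "real n * e - ln (4 * (real L - 1)) \<le> ln (real (card C))"
      using large_code_at_length[OF \<open>2 \<le> L\<close> p_nonneg
          le_exp_if_neg_log_rate_gt[OF elim(1) elim(5) p_nonneg] elim(2,3) build] by blast
    then have "r < code_rate n C"
      using elim(4,5) by (simp add: code_rate_def pos_less_divide_eq algebra_simps)
    then show ?case
      using C(1) by blast
  qed
qed

lemma limsup_rate_ge_exponent: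
  fixes p :: "nat \<Rightarrow> real" and Dec :: "nat \<Rightarrow> (nat \<Rightarrow> real) set \<Rightarrow> bool"
  assumes "2 \<le> L" and p_nonneg: "\<And>n. 0 \<le> p n"
    and lim: "(\<lambda>n. neg_log_rate n (p n)) \<longlonglongrightarrow> l" and "ereal E \<le> l"
    and singleton: "\<And>n. \<exists>C. Dec n C \<and> card C = 1"
    and build: "\<And>n m. \<exists>C. Dec n C \<and> real m - real m ^ L * p n \<le> real (card C) * (real L - 1)"
  shows "ereal (E / real (L - 1)) \<le> limsup (\<lambda>n. SUP C \<in> {C. Dec n C}. ereal (code_rate n C))"
proof -
  define F where "F n = (SUP C \<in> {C. Dec n C}. ereal (code_rate n C))" for n
  have F_ge: "ereal (code_rate n C) \<le> F n" if "Dec n C" for n C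
    unfolding F_def using that by (intro SUP_upper) simp
  have F_nonneg: "0 \<le> F n" for n
    using singleton[of n] F_ge by (force simp: code_rate_def zero_ereal_def)
  have "eventually (\<lambda>n. y < F n) sequentially" if y_less: "y < ereal (E / real (L - 1))" for y
  proof (cases "y < 0")
    case True
    then show ?thesis
      using F_nonneg by (intro always_eventually) (metis less_le_trans)
  next
    case False
    then obtain r where r: "y = ereal r" "0 \<le> r" "r < E / (real L - 1)"
      using y_less \<open>2 \<le> L\<close> by (cases y) (auto simp: of_nat_diff)
    then obtain e where "r < e" "e < E / (real L - 1)"
      using dense by blast
    then have "e * (real L - 1) < E"
      using \<open>2 \<le> L\<close> by (simp add: pos_less_divide_eq)
    from eventually_code_rate_gt[OF assms(1-4) build r(2) \<open>r < e\<close> this]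
    show ?thesis
    proof (rule eventually_mono)
      fix n assume "\<exists>C. Dec n C \<and> r < code_rate n C"
      then obtain C where "Dec n C" "y < ereal (code_rate n C)"
        using r(1) by auto
      then show "y < F n"
        using F_ge less_le_trans by blast
    qed
  qed
  then have "ereal (E / real (L - 1)) \<le> liminf F"
    by (simp add: le_Liminf_iff)
  also have "\<dots> \<le> limsup F"
    by (rule Liminf_le_Limsup) simp
  finally show ?thesis
    unfolding F_def .
qed

lemma capacity_ge_exponent:
  fixes D :: "nat \<Rightarrow> (nat \<Rightarrow> real) measure" and f :: "nat \<Rightarrow> (nat \<Rightarrow> nat \<Rightarrow> real) \<Rightarrow> real"
    and Dec :: "nat \<Rightarrow> (nat \<Rightarrow> real) set \<Rightarrow> bool"
  assumes "0 \<le> P" "2 \<le> L"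
    and D: "\<And>n. prob_space (D n)" "\<And>n. sets (D n) = sets (PiM {..<n} (\<lambda>_. lborel))"
      "\<And>n. AE x in D n. x \<in> rball n (\<lambda>_. 0) (sqrt (real n * P))"
    and exponent: "\<exists>l. (\<lambda>n. neg_log_rate n (measure (PiM {..<L} (\<lambda>_. D n))
                 {x \<in> space (PiM {..<L} (\<lambda>_. D n)). f n x \<le> real n * N})) \<longlonglongrightarrow> l \<and> ereal E \<le> l"
    and f: "\<And>n. f n \<in> borel_measurable (tuple_space n L)"
      "\<And>n x. f n (restrict x {..<L}) = f n x"
      "\<And>n v. v \<in> Rn n \<Longrightarrow> f n (\<lambda>_. v) \<le> real n * N"
    and Dec: "\<And>n C. finite C \<Longrightarrow> C \<subseteq> rball n (\<lambda>_. 0) (sqrt (real n * P)) \<Longrightarrow>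
      \<forall>x. (\<forall>i<L. x i \<in> C) \<and> inj_on x {..<L} \<longrightarrow> real n * N < f n x \<Longrightarrow> Dec n C"
  shows "ereal (E / real (L - 1)) \<le> limsup (\<lambda>n. SUP C \<in> {C. Dec n C}. ereal (code_rate n C))"
proof -
  define p where "p n = measure (PiM {..<L} (\<lambda>_. D n))
    {x \<in> space (PiM {..<L} (\<lambda>_. D n)). f n x \<le> real n * N}" for n
  obtain l where l: "(\<lambda>n. neg_log_rate n (p n)) \<longlonglongrightarrow> l" "ereal E \<le> l"
    using exponent unfolding p_def by blast
  have "0 < L"
    using \<open>2 \<le> L\<close> by simp
  show ?thesis
  proof (rule limsup_rate_ge_exponent[OF \<open>2 \<le> L\<close> _ l])
    fix n :: nat
    let ?origin = "\<lambda>_\<in>{..<n}. 0 :: real"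
    have "Dec n {?origin}"
    proof (rule Dec)
      show "{?origin} \<subseteq> rball n (\<lambda>_. 0) (sqrt (real n * P))"
        using \<open>0 \<le> P\<close> by (simp add: rball_def Rn_def sqnorm_def)
      have "\<not> inj_on x {..<L}" if "\<forall>i<L. x i \<in> {?origin}" for x
        using that \<open>2 \<le> L\<close> inj_onD[of x "{..<L}" 0 1] by auto
      then show "\<forall>x. (\<forall>i<L. x i \<in> {?origin}) \<and> inj_on x {..<L} \<longrightarrow> real n * N < f n x"
        by blast
    qed simp
    then show "\<exists>C. Dec n C \<and> card C = 1"
      by (intro exI[of _ "{?origin}"]) simp
  next
    fix n m
    obtain C where C: "finite C" "C \<subseteq> rball n (\<lambda>_. 0) (sqrt (real n * P))"
        "real m - real m ^ L * p n \<le> real (card C) * (real L - 1)"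
        "\<And>x. \<forall>i<L. x i \<in> C \<Longrightarrow> inj_on x {..<L} \<Longrightarrow> real n * N < f n x"
      using exists_expurgated_code[where D = "D n" and f = "f n" and t = "real n * N" and m = m,
          OF D(1) D(2) D(3) \<open>0 < L\<close> f(1) f(2) f(3)]
      unfolding p_def by blast
    have "Dec n C"
      using C(1,2,4) by (intro Dec) auto
    then show "\<exists>C. Dec n C \<and> real m - real m ^ L * p n \<le> real (card C) * (real L - 1)"
      using C(3) by blast
  qed (simp add: p_def)
qed

theorem mainTheorem4:
  fixes P N :: real and L :: nat
    and D :: "nat \<Rightarrow> (nat \<Rightarrow> real) measure"
    and E Ebar :: real
  assumes "P > 0" and "N > 0" and "L \<ge> 2"
    and "\<And>n. prob_space (D n)"
    and "\<And>n. sets (D n) = sets (PiM {..<n} (\<lambda>_. lborel))"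
    and "\<And>n. AE x in D n. x \<in> rball n (\<lambda>_. 0) (sqrt (real n * P))"
    and "\<exists>l. (\<lambda>n. neg_log_rate n (measure (PiM {..<L} (\<lambda>_. D n))
                 {x \<in> space (PiM {..<L} (\<lambda>_. D n)). cheb_rad2 n L x \<le> real n * N}))
              \<longlonglongrightarrow> l \<and> ereal E \<le> l"
    and "\<exists>l. (\<lambda>n. neg_log_rate n (measure (PiM {..<L} (\<lambda>_. D n))
                 {x \<in> space (PiM {..<L} (\<lambda>_. D n)). avg_rad2 n L x \<le> real n * N}))
              \<longlonglongrightarrow> l \<and> ereal Ebar \<le> l"
  shows "list_capacity P N L \<ge> ereal (E / real (L - 1)) \<and>
         avg_list_capacity P N L \<ge> ereal (Ebar / real (L - 1))"
proof
  have nonneg: "0 < L" "0 \<le> P" "0 \<le> N" "0 \<le> real n * N" for n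
    using assms(1-3) by auto
  show "list_capacity P N L \<ge> ereal (E / real (L - 1))"
    unfolding list_capacity_def
    by (rule capacity_ge_exponent[where f = "\<lambda>n. cheb_rad2 n L", OF _ assms(3-7)])
      (use nonneg in \<open>auto intro: list_decodable_if_cheb_rad2_gt cheb_rad2_measurable
        simp: cheb_rad2_restrict cheb_rad2_const\<close>)
  show "avg_list_capacity P N L \<ge> ereal (Ebar / real (L - 1))"
    unfolding avg_list_capacity_def
    by (rule capacity_ge_exponent[where f = "\<lambda>n. avg_rad2 n L", OF _ assms(3-6,8)])
      (use nonneg in \<open>auto simp: avg_list_decodable_def avg_rad2_measurable avg_rad2_restrict avg_rad2_const\<close>)
qed

end
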